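(* Let $k\ge 2$ be an integer, $0<\bar r\le k$ a residue, and $\mathcal{A}$ the alphabet of all positive integers congruent to $\bar r \pmod k$. Suppose that for every residue $r \pmod k$ there exists a matrix $\begin{pmatrix}a&b\\c&d\end{pmatrix}\in\mathcal{G}_{\mathcal{A}}$ with $\gcd(c,k)=1$ and $d\equiv r\pmod k$. Then for every $n\ge1$ we have $\mathfrak{D}_{\mathcal{A}}\bmod k^n=\mathbb{Z}/k^n\mathbb{Z}$.
   Context: For $a\in\mathbb{N}$ let $\gamma_a=\begin{pmatrix}0&1\\1&a\end{pmatrix}$ and let $\mathcal{G}_{\mathcal{A}}$ be the semigroup generated by $\gamma_a$, $a\in\mathcal{A}$. $\mathfrak{D}_{\mathcal{A}}=\{\langle \gamma e_2,e_2\rangle:\gamma\in\mathcal{G}_{\mathcal{A}}\}$ is the set of lower-right entries of elements of $\mathcal{G}_{\mathcal{A}}$. *)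

theory Defs
  imports Main "HOL-Number_Theory.Cong"
begin

text \<open>2x2 integer matrices, represented as (a, b, c, d) for the matrix with rows (a b) and (c d).\<close>
type_synonym mat2 = "int \<times> int \<times> int \<times> int"

fun mmul2 :: "mat2 \<Rightarrow> mat2 \<Rightarrow> mat2" where
  "mmul2 (a, b, c, d) (a', b', c', d') =
     (a * a' + b * c', a * b' + b * d', c * a' + d * c', c * b' + d * d')"

definition gamma :: "int \<Rightarrow> mat2" where
  "gamma a = (0, 1, 1, a)"

inductive_set semigrp :: "int set \<Rightarrow> mat2 set" for A :: "int set" where
  gen: "a \<in> A \<Longrightarrow> gamma a \<in> semigrp A"
| mul: "g \<in> semigrp A \<Longrightarrow> h \<in> semigrp A \<Longrightarrow> mmul2 g h \<in> semigrp A"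

definition Dset :: "int set \<Rightarrow> int set" where
  "Dset A = {d. \<exists>a b c. (a, b, c, d) \<in> semigrp A}"

end

theory Submission
  imports Defs
begin

text \<open>Every element of the semigroup ends in a generator, g = X \<gamma>_y, where X is either a product
  in the semigroup or the identity. Replacing the last factor \<gamma>_y by \<gamma>_x keeps us in the semigroup,
  and changes the lower-right entry to s + c x, with c the (unchanged) lower-left entry of g.
  If c is prime to k, then c is a unit modulo k^(n-1), so choosing x = y + k m with m suitable
  moves s + c x to any prescribed residue modulo k^n lifting d modulo k; and x = y + k m stays in
  the alphabet.\<close>

lemma mmul2_assoc: "mmul2 (mmul2 f g) h = mmul2 f (mmul2 g h)"
  by (cases f; cases g; cases h) (simp add: algebra_simps)

lemma mmul2_one_left: "mmul2 (1, 0, 0, 1) g = g"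
  by (cases g) simp

lemma semigrp_right_factor:
  assumes "g \<in> semigrp A"
  shows "\<exists>X y. y \<in> A \<and> g = mmul2 X (gamma y) \<and> (\<forall>x\<in>A. mmul2 X (gamma x) \<in> semigrp A)"
  using assms
proof (induction rule: semigrp.induct)
  case (gen a)
  then show ?case
    by (metis mmul2_one_left semigrp.gen)
next
  case (mul g h)
  then obtain X y where "y \<in> A" "h = mmul2 X (gamma y)"
    and X: "\<forall>x\<in>A. mmul2 X (gamma x) \<in> semigrp A"
    by blast
  then have "y \<in> A \<and> mmul2 g h = mmul2 (mmul2 g X) (gamma y)
      \<and> (\<forall>x\<in>A. mmul2 (mmul2 g X) (gamma x) \<in> semigrp A)"
    using mul.hyps(1) by (simp add: mmul2_assoc semigrp.mul)
  then show ?case by blast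
qed

lemma Dset_affine_family:
  assumes "(a, b, c, d) \<in> semigrp A"
  shows "\<exists>s y. y \<in> A \<and> d = s + c * y \<and> (\<forall>x\<in>A. s + c * x \<in> Dset A)"
proof -
  obtain p q s u y where y: "y \<in> A" and g: "(a, b, c, d) = mmul2 (p, q, s, u) (gamma y)"
    and fam: "\<forall>x\<in>A. mmul2 (p, q, s, u) (gamma x) \<in> semigrp A"
    using semigrp_right_factor[OF assms] by (metis prod_cases4)
  from g have "c = u" "d = s + u * y"
    by (simp_all add: gamma_def)
  moreover have "s + u * x \<in> Dset A" if "x \<in> A" for x
    using fam that unfolding Dset_def by (force simp: gamma_def)
  ultimately show ?thesis
    using y by blast
qed

lemma cong_lift_by_unit_multiple:
  fixes k u t z :: int and n :: nat
  assumes "k > 0" "n \<ge> 1" "coprime u k" "[t = z] (mod k)"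
  shows "\<exists>m \<ge> 0. [t + u * (k * m) = z] (mod k ^ n)"
proof -
  obtain w where w: "z - t = k * w"
    using assms(4) by (metis cong_iff_dvd_diff cong_sym dvdE)
  have "coprime u (k ^ (n - 1))"
    using assms(3) by simp
  then obtain v where v: "[u * v = 1] (mod k ^ (n - 1))"
    using cong_solve_coprime_int by blast
  define m where "m = (v * w) mod k ^ (n - 1)"
  have "m \<ge> 0"
    using assms(1) by (simp add: m_def)
  have "[u * m = u * (v * w)] (mod k ^ (n - 1))"
    unfolding m_def by (simp add: cong_def mod_mult_right_eq)
  also have "[u * (v * w) = 1 * w] (mod k ^ (n - 1))"
    using cong_scalar_right[OF v, of w] by (simp add: mult.assoc)
  finally have "k ^ (n - 1) dvd u * m - w"
    by (simp add: cong_iff_dvd_diff)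
  then have "k * k ^ (n - 1) dvd k * (u * m - w)"
    by (rule mult_dvd_mono[OF dvd_refl])
  moreover have "k * k ^ (n - 1) = k ^ n"
    using assms(2) by (simp add: power_eq_if)
  moreover have "t + u * (k * m) - z = k * (u * m - w)"
    using w by (simp add: algebra_simps)
  ultimately have "[t + u * (k * m) = z] (mod k ^ n)"
    by (metis cong_iff_dvd_diff)
  with \<open>m \<ge> 0\<close> show ?thesis by blast
qed

theorem lemmaB9:
  fixes k rbar :: int
  assumes "k \<ge> 2"
    and "0 < rbar" and "rbar \<le> k"
    and "\<forall>r. \<exists>a b c d. (a, b, c, d) \<in> semigrp {x. x > 0 \<and> [x = rbar] (mod k)}
                          \<and> gcd c k = 1 \<and> [d = r] (mod k)"
  shows "\<forall>n::nat. n \<ge> 1 \<longrightarrow>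
           (\<forall>x. \<exists>d \<in> Dset {x. x > 0 \<and> [x = rbar] (mod k)}. [d = x] (mod k ^ n))"
proof (intro allI impI)
  fix n :: nat and z :: int
  assume n: "n \<ge> 1"
  define A where "A = {x. x > 0 \<and> [x = rbar] (mod k)}"
  obtain a b c d where "(a, b, c, d) \<in> semigrp A" "gcd c k = 1" "[d = z] (mod k)"
    using spec[OF assms(4), of z] A_def by metis
  then obtain s y where y: "y \<in> A" "[s + c * y = z] (mod k)" "coprime c k"
    and fam: "\<forall>x\<in>A. s + c * x \<in> Dset A"
    using Dset_affine_family by (metis coprime_iff_gcd_eq_1)
  obtain m where "m \<ge> 0" and m: "[s + c * y + c * (k * m) = z] (mod k ^ n)"
    using cong_lift_by_unit_multiple[OF _ n y(3) y(2)] assms(1) by auto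
  have "k * m \<ge> 0"
    using \<open>m \<ge> 0\<close> assms(1) by simp
  then have "y + k * m \<in> A"
    using y(1) unfolding A_def by (auto simp: cong_def)
  with fam have "s + c * (y + k * m) \<in> Dset A"
    by blast
  moreover have "[s + c * (y + k * m) = z] (mod k ^ n)"
    using m by (simp add: distrib_left add.assoc)
  ultimately
  show "\<exists>d \<in> Dset {x. x > 0 \<and> [x = rbar] (mod k)}. [d = z] (mod k ^ n)"
    unfolding A_def by blast
qed

end
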